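(* Let $\nu$ be a Krull valuation on $\mathbb{K}[x]$, $\mu$ a valuation on $\overline{\mathbb{K}}[x]$ extending $\nu$, $Q$ a key polynomial for $\nu$ of degree $n$, and $a$ an optimizing root of $Q$. Assume $\nu(Q)\in\mu\overline{\mathbb{K}}$, let $e$ be the least positive integer with $e\nu(Q)\in\mu\mathbb{K}(a)$, let $h\in\mathbb{K}[x]$ with $\deg h<n$ and $\nu(h)=e\nu(Q)$, and put $r=Q^e/h$. If $g=t_0+t_1r+\dots+t_sr^s$ with $t_i\in\mathbb{K}[x]$ and $\deg t_i<ne$ whenever $t_i\ne0$, then $\mu_{x-a}(g)=\nu_Q(g)$. In particular $\mu_{x-a}$ and $\nu_Q$ coincide on $\mathbb{K}(r)$.
   Context: $\overline{\mathbb{K}}$ is an algebraic closure of $\mathbb{K}$; $\mu\overline{\mathbb{K}}$, $\mu\mathbb{K}(a)$ denote value groups of $\mu$ on $\overline{\mathbb{K}}$, $\mathbb{K}(a)$. Truncations: $\nu_Q(f)=\min_i\nu(f_iQ^i)$ for the $Q$-expansion $f=\sum f_iQ^i$ ($\deg f_i<\deg Q$), and $\mu_{x-a}(\sum_i c_i(x-a)^i)=\min_i\{\mu(c_i)+i\mu(x-a)\}$; both are valuations, extended to the fields of rational functions. Optimizing root: a root $c$ of $Q$ maximizing $\mu(x-c)$. Key polynomials: for nonzero $f\in\mathbb{K}[x]$, with Hasse derivatives $\partial_bf=\sum_{i\ge b}\binom{i}{b}a_ix^{i-b}$ for $f=\sum a_ix^i$, $\epsilon(f)=\max_{1\le b\le\deg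 f}(\nu(f)-\nu(\partial_bf))/b$ if $\deg f>0$ and $\epsilon(f)=-\infty$ if $f$ is constant; a monic $Q$ is a key polynomial for $\nu$ if $\epsilon(f)\ge\epsilon(Q)$ implies $\deg f\ge\deg Q$ for all $f$. *)

theory Defs
  imports "HOL-Computational_Algebra.Polynomial" "HOL-Computational_Algebra.Fraction_Field"
begin

definition nmul :: "nat \<Rightarrow> 'g::ab_group_add \<Rightarrow> 'g" where
  "nmul n x = (\<Sum>i<n. x)"

(* Krull valuation with trivial support: values of nonzero elements in an ordered
   abelian group; the value of 0 is the formal \<infinity> and is never used. *)
definition valuation :: "('a::idom \<Rightarrow> 'g::linordered_ab_group_add) \<Rightarrow> bool" where
  "valuation v \<longleftrightarrow>
     (\<forall>x y. x \<noteq> 0 \<longrightarrow> y \<noteq> 0 \<longrightarrow> v (x * y) = v x + v y) \<and>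
     (\<forall>x y. x \<noteq> 0 \<longrightarrow> y \<noteq> 0 \<longrightarrow> x + y \<noteq> 0 \<longrightarrow> min (v x) (v y) \<le> v (x + y))"

definition is_alg_closure :: "('k::field \<Rightarrow> 'c::field) \<Rightarrow> bool" where
  "is_alg_closure emb \<longleftrightarrow>
     inj emb \<and> emb 0 = 0 \<and> emb 1 = 1 \<and>
     (\<forall>a b. emb (a + b) = emb a + emb b) \<and> (\<forall>a b. emb (a * b) = emb a * emb b) \<and>
     (\<forall>p :: 'c poly. degree p > 0 \<longrightarrow> (\<exists>z. poly p z = 0)) \<and>
     (\<forall>z. \<exists>p :: 'k poly. p \<noteq> 0 \<and> poly (map_poly emb p) z = 0)"

definition hasse :: "nat \<Rightarrow> 'a::comm_ring_1 poly \<Rightarrow> 'a poly" where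
  "hasse b f = (\<Sum>i\<le>degree f. if b \<le> i then monom (of_nat (i choose b) * coeff f i) (i - b) else 0)"

(* The finite (i.e. not -\<infinity>) terms (\<nu>(f)-\<nu>(\<partial>_b f))/b, 1\<le>b\<le>deg f, of \<epsilon>(f),
   represented as pairs (numerator, denominator b); terms with \<partial>_b f = 0 equal -\<infinity>. *)
definition eps_terms :: "('a::field poly \<Rightarrow> 'g::linordered_ab_group_add) \<Rightarrow> 'a poly \<Rightarrow> ('g \<times> nat) set" where
  "eps_terms \<nu> f = {(\<nu> f - \<nu> (hasse b f), b) | b. 1 \<le> b \<and> b \<le> degree f \<and> hasse b f \<noteq> 0}"

(* \<epsilon>(f) \<ge> \<epsilon>(Q): max over the terms, comparing x/b \<ge> y/c as c*x \<ge> b*y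
   (\<epsilon> = -\<infinity> when there is no finite term, in particular for constants) *)
definition eps_ge :: "('a::field poly \<Rightarrow> 'g::linordered_ab_group_add) \<Rightarrow> 'a poly \<Rightarrow> 'a poly \<Rightarrow> bool" where
  "eps_ge \<nu> f Q \<longleftrightarrow> eps_terms \<nu> Q = {} \<or>
     (\<exists>(x, b) \<in> eps_terms \<nu> f. \<forall>(y, c) \<in> eps_terms \<nu> Q. nmul b y \<le> nmul c x)"

definition key_poly :: "('a::field poly \<Rightarrow> 'g::linordered_ab_group_add) \<Rightarrow> 'a poly \<Rightarrow> bool" where
  "key_poly \<nu> Q \<longleftrightarrow> lead_coeff Q = 1 \<and>
     (\<forall>f. f \<noteq> 0 \<longrightarrow> eps_ge \<nu> f Q \<longrightarrow> degree Q \<le> degree f)"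

(* i-th coefficient of the Q-expansion f = \<Sum> f_i Q^i, deg f_i < deg Q *)
definition qexp :: "'a::field poly \<Rightarrow> 'a poly \<Rightarrow> nat \<Rightarrow> 'a poly" where
  "qexp Q f i = (f div Q ^ i) mod Q"

definition trunc_Q :: "('a::field poly \<Rightarrow> 'g::linordered_ab_group_add) \<Rightarrow> 'a poly \<Rightarrow> 'a poly \<Rightarrow> 'g" where
  "trunc_Q \<nu> Q f = Min {\<nu> (qexp Q f i * Q ^ i) | i. i \<le> degree f \<and> qexp Q f i \<noteq> 0}"

(* truncation \<mu>_{x-a}(\<Sum> c_i (x-a)^i) = min_i (\<mu>(c_i) + i \<mu>(x-a)), for F \<noteq> 0 *)
definition trunc_lin :: "('c::field poly \<Rightarrow> 'g::linordered_ab_group_add) \<Rightarrow> 'c \<Rightarrow> 'c poly \<Rightarrow> 'g" where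
  "trunc_lin \<mu> a F = Min {\<mu> [:coeff (pcompose F [:a, 1:]) i:] + nmul i (\<mu> [:- a, 1:]) | i.
        i \<le> degree F \<and> coeff (pcompose F [:a, 1:]) i \<noteq> 0}"

(* extension of a valuation w on K[x] to K(x) = fraction field: w(f/d) = w f - w d for any
   representation f/d with d \<noteq> 0 (well defined since w is multiplicative); None represents \<infinity> *)
definition ext_frac :: "('a::field poly \<Rightarrow> 'g::linordered_ab_group_add) \<Rightarrow> 'a poly fract \<Rightarrow> 'g option" where
  "ext_frac w q = (if q = 0 then None
      else (let (f, d) = (SOME (f, d). d \<noteq> 0 \<and> q = Fract f d) in Some (w f - w d)))"

definition vgroup_closure :: "('c::field poly \<Rightarrow> 'g::linordered_ab_group_add) \<Rightarrow> 'g set" where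
  "vgroup_closure \<mu> = {\<mu> [:z:] | z. z \<noteq> 0}"

(* value group \<mu>K(a) of \<mu> on K(a) = K[a] = {p(a) | p \<in> K[x]} *)
definition vgroup_Ka :: "('k::field \<Rightarrow> 'c::field) \<Rightarrow> ('c poly \<Rightarrow> 'g::linordered_ab_group_add) \<Rightarrow> 'c \<Rightarrow> 'g set" where
  "vgroup_Ka emb \<mu> a = {\<mu> [:poly (map_poly emb p) a:] | p. poly (map_poly emb p) a \<noteq> 0}"

definition optimizing_root :: "('k::field \<Rightarrow> 'c::field) \<Rightarrow> ('c poly \<Rightarrow> 'g::linordered_ab_group_add) \<Rightarrow> 'k poly \<Rightarrow> 'c \<Rightarrow> bool" where
  "optimizing_root emb \<mu> Q a \<longleftrightarrow> poly (map_poly emb Q) a = 0 \<and>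
     (\<forall>c. poly (map_poly emb Q) c = 0 \<longrightarrow> \<mu> [:- c, 1:] \<le> \<mu> [:- a, 1:])"

end

theory Submission
  imports Defs
begin

text \<open>
  Put \<open>\<gamma> = \<mu>(x - a)\<close> and expand polynomials over the algebraic closure in powers of \<open>x - a\<close>;
  then \<open>\<mu>\<^sub>x\<^sub>-\<^sub>a\<close> is the monomial valuation of weight \<open>\<gamma>\<close>, and the largest index of a minimal
  term is additive under products. A linear factor \<open>x - b\<close> has value \<open>\<mu>(x - b)\<close> there, with
  last minimal index 1 if \<open>\<mu>(x - b) = \<gamma>\<close> and 0 if \<open>\<mu>(x - b) < \<gamma>\<close>. As \<open>a\<close> is an optimizing
  root, the roots of \<open>Q\<close> satisfy \<open>\<mu>(x - b) \<le> \<gamma>\<close> with equality for \<open>b = a\<close>, so \<open>Q\<close> has last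
  minimal index \<open>\<ge> 1\<close>. A nonzero \<open>f\<close> with \<open>deg f < deg Q\<close> has only roots with \<open>\<mu>(x - b) < \<gamma>\<close>:
  otherwise the Hasse derivatives of \<open>\<prod>(x - b)\<close> give \<open>\<epsilon>(f) \<ge> \<gamma> \<ge> \<epsilon>(Q)\<close>, contradicting that
  \<open>Q\<close> is a key polynomial; so \<open>f\<close> has last minimal index 0. In \<open>f = \<Sum> f\<^sub>i Q\<^sup>i\<close> each term
  then has value \<open>\<nu>(f\<^sub>i Q\<^sup>i)\<close> and last minimal index \<open>i\<close> times that of \<open>Q\<close>, so among the terms of
  least value the one with largest \<open>i\<close> cannot cancel: \<open>\<mu>\<^sub>x\<^sub>-\<^sub>a = \<nu>\<^sub>Q\<close> on \<open>K[x]\<close>, hence on \<open>K(x)\<close>.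
\<close>

lemma nmul_Suc: "nmul (Suc n) x = x + nmul n x"
  by (simp add: nmul_def add.commute)

lemma nmul_0 [simp]: "nmul 0 x = 0"
  and nmul_Suc_0 [simp]: "nmul (Suc 0) x = x"
  by (simp_all add: nmul_def)

lemma nmul_add_left: "nmul (m + n) x = nmul m x + nmul n x"
  by (induction m) (auto simp: nmul_Suc add.assoc)

lemma nmul_nmul: "nmul m (nmul n x) = nmul (m * n) x"
  by (induction m) (auto simp: nmul_Suc nmul_add_left)

lemma nmul_commute: "nmul m (nmul n x) = nmul n (nmul m x)"
  by (simp add: nmul_nmul mult.commute)

lemma nmul_mono: "(x::'a::linordered_ab_group_add) \<le> y \<Longrightarrow> nmul n x \<le> nmul n y"
  by (induction n) (auto simp: nmul_Suc add_mono)

locale krull_valuation =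
  fixes v :: "'a::idom \<Rightarrow> 'g::linordered_ab_group_add"
  assumes valuation: "valuation v"
begin

lemma mult: "x \<noteq> 0 \<Longrightarrow> y \<noteq> 0 \<Longrightarrow> v (x * y) = v x + v y"
  using valuation unfolding valuation_def by blast

lemma min_le_add: "x \<noteq> 0 \<Longrightarrow> y \<noteq> 0 \<Longrightarrow> x + y \<noteq> 0 \<Longrightarrow> min (v x) (v y) \<le> v (x + y)"
  using valuation unfolding valuation_def by blast

lemma one [simp]: "v 1 = 0"
  using mult[of 1 1] by simp

lemma minus_one [simp]: "v (- 1) = 0"
proof -
  have "v (- 1) + v (- 1) = 0"
    using mult[of "- 1" "- 1"] by simp
  then show ?thesis
    by (metis add_neg_neg add_pos_pos less_irrefl linorder_cases)
qed

lemma uminus [simp]: "v (- x) = v x"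
  using mult[of "- 1" x] by (cases "x = 0") auto

lemma power: "x \<noteq> 0 \<Longrightarrow> v (x ^ n) = nmul n (v x)"
  by (induction n) (auto simp: mult nmul_Suc)

lemma add_eq_left_if_less:
  assumes "x \<noteq> 0" "y \<noteq> 0" "v x < v y"
  shows "x + y \<noteq> 0 \<and> v (x + y) = v x"
proof -
  have sum_nz: "x + y \<noteq> 0"
    using assms by (metis add_eq_0_iff less_irrefl uminus)
  have "min (v (x + y)) (v (- y)) \<le> v (x + y + - y)"
    using min_le_add[OF sum_nz, of "- y"] assms by simp
  then have "v (x + y) \<le> v x"
    using assms(3) by (auto simp: min_def split: if_splits)
  moreover have "v x \<le> v (x + y)"
    using min_le_add[OF assms(1,2) sum_nz] assms(3) by simp
  ultimately show ?thesis
    using sum_nz by simp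
qed

text \<open>\<open>v 0\<close> is the formal \<open>\<infinity>\<close>, so \<open>0\<close> satisfies every bound.\<close>

definition val_ge :: "'g \<Rightarrow> 'a \<Rightarrow> bool" where
  "val_ge w x \<longleftrightarrow> x = 0 \<or> w \<le> v x"

definition val_gt :: "'g \<Rightarrow> 'a \<Rightarrow> bool" where
  "val_gt w x \<longleftrightarrow> x = 0 \<or> w < v x"

lemma val_ge_0 [simp]: "val_ge w 0"
  and val_gt_0 [simp]: "val_gt w 0"
  by (simp_all add: val_ge_def val_gt_def)

lemma val_ge_add: "val_ge w x \<Longrightarrow> val_ge w y \<Longrightarrow> val_ge w (x + y)"
  unfolding val_ge_def using min_le_add[of x y] by (force simp: min_le_iff_disj)

lemma val_gt_add: "val_gt w x \<Longrightarrow> val_gt w y \<Longrightarrow> val_gt w (x + y)"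
  unfolding val_gt_def using min_le_add[of x y] by (force simp: min_le_iff_disj)

lemma val_ge_sum: "(\<And>i. i \<in> S \<Longrightarrow> val_ge w (f i)) \<Longrightarrow> val_ge w (sum f S)"
  by (induction S rule: infinite_finite_induct) (auto intro: val_ge_add)

lemma val_gt_sum: "(\<And>i. i \<in> S \<Longrightarrow> val_gt w (f i)) \<Longrightarrow> val_gt w (sum f S)"
  by (induction S rule: infinite_finite_induct) (auto intro: val_gt_add)

lemma add_val_gt_eq_left: "x \<noteq> 0 \<Longrightarrow> val_gt (v x) y \<Longrightarrow> x + y \<noteq> 0 \<and> v (x + y) = v x"
  unfolding val_gt_def using add_eq_left_if_less[of x y] by (cases "y = 0") auto

lemma val_ge_mult: "val_ge w x \<Longrightarrow> y \<noteq> 0 \<Longrightarrow> val_ge (w + v y) (x * y)"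
  unfolding val_ge_def by (cases "x = 0") (auto simp: mult)

lemma val_gt_mult: "val_gt w x \<Longrightarrow> y \<noteq> 0 \<Longrightarrow> val_gt (w + v y) (x * y)"
  unfolding val_gt_def by (cases "x = 0") (auto simp: mult)

lemma val_ge_mono: "val_ge w x \<Longrightarrow> w' \<le> w \<Longrightarrow> val_ge w' x"
  unfolding val_ge_def by auto

lemma val_gt_if_ge_less: "val_ge w x \<Longrightarrow> w' < w \<Longrightarrow> val_gt w' x"
  unfolding val_ge_def val_gt_def by auto

end

text \<open>
  The monomial valuation \<open>\<Sum> c\<^sub>i X\<^sup>i \<mapsto> min\<^sub>i (v c\<^sub>i + i\<gamma>)\<close>; \<open>last_min P w t\<close> says that its value on
  \<open>P\<close> is \<open>w\<close> and that \<open>t\<close> is the largest index of a term of value \<open>w\<close>.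
\<close>

locale monomial_valuation = krull_valuation v for v :: "'c::field \<Rightarrow> 'g::linordered_ab_group_add" +
  fixes \<gamma> :: 'g
begin

definition term_val :: "'c poly \<Rightarrow> nat \<Rightarrow> 'g" where
  "term_val P i = v (coeff P i) + nmul i \<gamma>"

definition dominated :: "'g \<Rightarrow> nat \<Rightarrow> 'c poly \<Rightarrow> bool" where
  "dominated w t P \<longleftrightarrow> (\<forall>i. coeff P i \<noteq> 0 \<longrightarrow> w \<le> term_val P i \<and> (t \<le> i \<longrightarrow> w < term_val P i))"

definition last_min :: "'c poly \<Rightarrow> 'g \<Rightarrow> nat \<Rightarrow> bool" where
  "last_min P w t \<longleftrightarrow> coeff P t \<noteq> 0 \<and> term_val P t = w \<and> dominated w (Suc t) P"

lemma val_ge_coeff_iff: "val_ge (w - nmul i \<gamma>) (coeff P i) \<longleftrightarrow> (coeff P i \<noteq> 0 \<longrightarrow> w \<le> term_val P i)"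
  unfolding val_ge_def term_val_def by (auto simp: algebra_simps le_diff_eq)

lemma val_gt_coeff_iff: "val_gt (w - nmul i \<gamma>) (coeff P i) \<longleftrightarrow> (coeff P i \<noteq> 0 \<longrightarrow> w < term_val P i)"
  unfolding val_gt_def term_val_def by (auto simp: algebra_simps less_diff_eq)

lemma dominated_iff:
  "dominated w t P \<longleftrightarrow>
     (\<forall>i. val_ge (w - nmul i \<gamma>) (coeff P i) \<and> (t \<le> i \<longrightarrow> val_gt (w - nmul i \<gamma>) (coeff P i)))"
  unfolding dominated_def val_ge_coeff_iff val_gt_coeff_iff by blast

lemma dominated_0 [simp]: "dominated w t 0"
  by (simp add: dominated_def)

lemma dominated_add: "dominated w t P \<Longrightarrow> dominated w t R \<Longrightarrow> dominated w t (P + R)"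
  unfolding dominated_iff by (simp add: val_ge_add val_gt_add)

lemma dominated_sum: "(\<And>i. i \<in> S \<Longrightarrow> dominated w t (f i)) \<Longrightarrow> dominated w t (sum f S)"
  by (induction S rule: infinite_finite_induct) (auto intro: dominated_add)

lemma dominated_mono: "dominated w t P \<Longrightarrow> t \<le> t' \<Longrightarrow> dominated w t' P"
  unfolding dominated_def by auto

lemma last_min_imp_dominated:
  "last_min P w' t' \<Longrightarrow> w < w' \<or> (w' = w \<and> t' < t) \<Longrightarrow> dominated w t P"
  unfolding last_min_def dominated_def by (auto intro: order_less_le_trans)

lemma last_min_add_dominated:
  assumes P: "last_min P w t" and R: "dominated w t R"
  shows "last_min (P + R) w t"
proof -
  have "val_gt (w - nmul t \<gamma>) (coeff R t)"
    using R by (auto simp: dominated_iff)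
  moreover have "v (coeff P t) = w - nmul t \<gamma>"
    using P by (simp add: last_min_def term_val_def algebra_simps)
  ultimately have "coeff (P + R) t \<noteq> 0 \<and> term_val (P + R) t = w"
    using add_val_gt_eq_left[of "coeff P t"] P by (simp add: last_min_def term_val_def)
  moreover have "dominated w (Suc t) (P + R)"
    using P dominated_mono[OF R, of "Suc t"] by (simp add: last_min_def dominated_add)
  ultimately show ?thesis
    by (simp add: last_min_def)
qed

lemma last_min_const: "c \<noteq> 0 \<Longrightarrow> last_min [:c:] (v c) 0"
  unfolding last_min_def dominated_def term_val_def by (auto simp: coeff_pCons split: nat.splits)

lemma Min_term_val_eq:
  assumes "last_min P w t"
  shows "Min {term_val P i | i. i \<le> degree P \<and> coeff P i \<noteq> 0} = w"
proof (rule Min_eqI)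
  show "w \<in> {term_val P i | i. i \<le> degree P \<and> coeff P i \<noteq> 0}"
    using assms le_degree unfolding last_min_def by blast
qed (use assms in \<open>auto simp: last_min_def dominated_def\<close>)

lemma val_ge_coeff_mult:
  assumes "coeff P i \<noteq> 0 \<longrightarrow> w \<le> term_val P i" "coeff R j \<noteq> 0 \<longrightarrow> u \<le> term_val R j"
  shows "val_ge (w + u - nmul (i + j) \<gamma>) (coeff P i * coeff R j)"
proof (cases "coeff P i = 0 \<or> coeff R j = 0")
  case False
  then have "w + u \<le> term_val P i + term_val R j"
    using assms by (auto intro: add_mono)
  then show ?thesis
    using False by (simp add: val_ge_def mult term_val_def nmul_add_left algebra_simps le_diff_eq)
qed auto

lemma val_gt_coeff_mult:
  assumes "coeff P i \<noteq> 0 \<longrightarrow> w \<le> term_val P i" "coeff R j \<noteq> 0 \<longrightarrow> u \<le> term_val R j"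
    and "(coeff P i \<noteq> 0 \<longrightarrow> w < term_val P i) \<or> (coeff R j \<noteq> 0 \<longrightarrow> u < term_val R j)"
  shows "val_gt (w + u - nmul (i + j) \<gamma>) (coeff P i * coeff R j)"
proof (cases "coeff P i = 0 \<or> coeff R j = 0")
  case False
  then have "w + u < term_val P i + term_val R j"
    using assms by (auto intro: add_less_le_mono add_le_less_mono)
  then show ?thesis
    using False by (simp add: val_gt_def mult term_val_def nmul_add_left algebra_simps less_diff_eq)
qed auto

text \<open>In \<open>coeff (P * R) (t + s)\<close> only the product of the two last minimal terms has minimal value.\<close>

lemma last_min_mult:
  assumes P: "last_min P w t" and R: "last_min R u s"
  shows "last_min (P * R) (w + u) (t + s)"
proof -
  have P_ge: "coeff P i \<noteq> 0 \<longrightarrow> w \<le> term_val P i" and R_ge: "coeff R j \<noteq> 0 \<longrightarrow> u \<le> term_val R j"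
    and P_gt: "t < i \<Longrightarrow> coeff P i \<noteq> 0 \<longrightarrow> w < term_val P i"
    and R_gt: "s < j \<Longrightarrow> coeff R j \<noteq> 0 \<longrightarrow> u < term_val R j" for i j
    using P R unfolding last_min_def dominated_def by auto
  have ge: "val_ge (w + u - nmul k \<gamma>) (coeff P i * coeff R (k - i))" if "i \<le> k" for i k
    using val_ge_coeff_mult[OF P_ge R_ge, of i "k - i"] that by simp
  have gt: "val_gt (w + u - nmul k \<gamma>) (coeff P i * coeff R (k - i))"
    if "i \<le> k" "t < i \<or> s < k - i" for i k
    using val_gt_coeff_mult[OF P_ge R_ge, of i "k - i"] that P_gt R_gt by auto
  have dom: "dominated (w + u) (Suc (t + s)) (P * R)"
    unfolding dominated_iff coeff_mult
  proof (intro allI conjI impI)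
    fix k
    show "val_ge (w + u - nmul k \<gamma>) (\<Sum>i\<le>k. coeff P i * coeff R (k - i))"
      by (intro val_ge_sum ge) simp
    assume "Suc (t + s) \<le> k"
    then show "val_gt (w + u - nmul k \<gamma>) (\<Sum>i\<le>k. coeff P i * coeff R (k - i))"
      by (intro val_gt_sum gt) auto
  qed
  define k where "k = t + s"
  have split: "coeff (P * R) k = coeff P t * coeff R s + (\<Sum>i\<in>{..k} - {t}. coeff P i * coeff R (k - i))"
    unfolding coeff_mult by (subst sum.remove[of _ t]) (auto simp: k_def)
  have rest: "val_gt (w + u - nmul k \<gamma>) (\<Sum>i\<in>{..k} - {t}. coeff P i * coeff R (k - i))"
    by (intro val_gt_sum gt) (auto simp: k_def)
  have lead_nz: "coeff P t * coeff R s \<noteq> 0" and lead_val: "v (coeff P t * coeff R s) = w + u - nmul k \<gamma>"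
    using P R unfolding last_min_def term_val_def k_def by (auto simp: mult nmul_add_left algebra_simps)
  have "coeff (P * R) k \<noteq> 0 \<and> v (coeff (P * R) k) = w + u - nmul k \<gamma>"
    using add_val_gt_eq_left[OF lead_nz] rest lead_val split by simp
  then show ?thesis
    using dom unfolding last_min_def k_def by (simp add: term_val_def)
qed

lemma last_min_power: "last_min P w t \<Longrightarrow> last_min (P ^ n) (nmul n w) (n * t)"
proof (induction n)
  case 0
  show ?case
    using last_min_const[of 1] by (simp add: one_pCons)
qed (simp add: nmul_Suc last_min_mult)


lemma last_min_linear_0: "c \<noteq> 0 \<Longrightarrow> v c < \<gamma> \<Longrightarrow> last_min [:c, 1:] (v c) 0"
  unfolding last_min_def dominated_def term_val_def
  by (auto simp: coeff_pCons split: nat.splits)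

lemma last_min_linear_1: "(c \<noteq> 0 \<Longrightarrow> \<gamma> \<le> v c) \<Longrightarrow> last_min [:c, 1:] \<gamma> 1"
  unfolding last_min_def dominated_def term_val_def
  by (auto simp: coeff_pCons split: nat.splits)

lemma last_min_sum:
  assumes "finite S" "i0 \<in> S"
    and "\<And>i. i \<in> S \<Longrightarrow> last_min (P i) (w i) (t i)"
    and "\<And>i. i \<in> S \<Longrightarrow> i \<noteq> i0 \<Longrightarrow> w i0 < w i \<or> (w i = w i0 \<and> t i < t i0)"
  shows "last_min (sum P S) (w i0) (t i0)"
proof -
  have "dominated (w i0) (t i0) (\<Sum>i\<in>S - {i0}. P i)"
    using assms(3,4) by (intro dominated_sum last_min_imp_dominated) auto
  then have "last_min (P i0 + (\<Sum>i\<in>S - {i0}. P i)) (w i0) (t i0)"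
    using assms(2,3) by (intro last_min_add_dominated) auto
  then show ?thesis
    using assms(1,2) by (simp add: sum.remove)
qed

end

definition lin_prod :: "'a::comm_ring_1 list \<Rightarrow> 'a poly" where
  "lin_prod rs = (\<Prod>b\<leftarrow>rs. [:- b, 1:])"

lemma lin_prod_Nil [simp]: "lin_prod [] = 1"
  and lin_prod_Cons [simp]: "lin_prod (b # rs) = [:- b, 1:] * lin_prod rs"
  by (simp_all add: lin_prod_def)

lemma lin_prod_nonzero [simp]: "lin_prod (rs :: 'a::idom list) \<noteq> 0"
  by (induction rs) (auto simp del: mult_pCons_left)

lemma degree_lin_prod [simp]: "degree (lin_prod (rs :: 'a::idom list)) = length rs"
  by (induction rs) (auto simp: degree_mult_eq simp del: mult_pCons_left)

lemma poly_lin_prod_eq_0_iff: "poly (lin_prod rs) (z :: 'a::idom) = 0 \<longleftrightarrow> z \<in> set rs"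
  by (induction rs) auto

lemma coeff_hasse: "coeff (hasse b F) k = of_nat ((k + b) choose b) * coeff F (k + b)"
proof -
  have "coeff (hasse b F) k = (\<Sum>i\<le>degree F. if i = k + b then of_nat (i choose b) * coeff F i else 0)"
    unfolding hasse_def coeff_sum by (intro sum.cong) (auto simp: coeff_monom)
  also have "\<dots> = of_nat ((k + b) choose b) * coeff F (k + b)"
    by (auto simp: coeff_eq_0)
  finally show ?thesis .
qed

lemma hasse_0 [simp]: "hasse 0 F = F"
  by (simp add: poly_eq_iff coeff_hasse)

lemma hasse_eq_0_if_degree_less: "degree F < b \<Longrightarrow> hasse b F = 0"
  by (simp add: poly_eq_iff coeff_hasse coeff_eq_0)

lemma hasse_mult_linear:
  "hasse (Suc b) (F * [:- c, 1:]) = hasse (Suc b) F * [:- c, 1:] + hasse b F"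
proof -
  have lin: "coeff (P * [:- c, 1:]) k = - c * coeff P k + (if k = 0 then 0 else coeff P (k - 1))"
    for P :: "'a poly" and k
    by (cases k) (simp_all add: mult_pCons_right coeff_pCons)
  show ?thesis
    by (rule poly_eqI, case_tac n) (simp_all add: coeff_hasse lin algebra_simps)
qed

lemma hasse_map_poly:
  assumes "f 0 = 0" "f 1 = 1" "\<And>x y. f (x + y) = f x + f y" "\<And>x y. f (x * y) = f x * f y"
  shows "hasse b (map_poly f F) = map_poly f (hasse b F)"
proof -
  have "f (of_nat m) = of_nat m" for m
    by (induction m) (simp_all add: assms)
  then show ?thesis
    by (simp add: poly_eq_iff coeff_hasse coeff_map_poly assms)
qed

text \<open>
  \<open>hasse_max_at F D k\<close>: the quotients \<open>(v F - v (\<partial>\<^sub>j F)) / j\<close> occurring in \<open>\<epsilon>(F)\<close> are bounded by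
  \<open>D\<close>, and \<open>k\<close> is the largest \<open>j\<close> attaining the bound.
\<close>

locale poly_valuation = krull_valuation v for v :: "'c::field poly \<Rightarrow> 'g::linordered_ab_group_add"
begin

definition hasse_max_at :: "'c poly \<Rightarrow> 'g \<Rightarrow> nat \<Rightarrow> bool" where
  "hasse_max_at F D k \<longleftrightarrow> hasse k F \<noteq> 0 \<and> v (hasse k F) = v F - nmul k D \<and>
     (\<forall>j. val_ge (v F - nmul j D) (hasse j F) \<and> (k < j \<longrightarrow> val_gt (v F - nmul j D) (hasse j F)))"

lemma hasse_max_at_const:
  assumes "c \<noteq> 0"
  shows "hasse_max_at [:c:] D 0"
proof -
  have "hasse j [:c:] = 0" if "0 < j" for j
    using that by (simp add: hasse_eq_0_if_degree_less)
  moreover have "val_ge (v [:c:] - nmul j D) (hasse j [:c:])" for j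
    using calculation[of j] by (cases j) (simp_all add: val_ge_def)
  ultimately show ?thesis
    using assms unfolding hasse_max_at_def by simp
qed

context
  fixes G :: "'c poly" and c :: 'c and D :: 'g and m :: nat
  assumes G: "hasse_max_at G D m" "G \<noteq> 0"
begin

private abbreviation (input) L where "L \<equiv> [:- c, 1:]"

declare mult_pCons_right [simp del]

private lemma val_mult_linear: "v (G * L) = v G + v L"
  using G(2) by (intro mult) auto

private lemma val_ge_hasse_mult_linear:
  assumes "v L \<le> D"
  shows "val_ge (v (G * L) - nmul j D) (hasse j (G * L))"
proof (cases j)
  case (Suc j')
  have "val_ge (v (G * L) - nmul j D) (hasse (Suc j') G * L)"
    using val_ge_mult[of "v G - nmul j D" "hasse (Suc j') G" L] G(1) Suc
    by (simp add: hasse_max_at_def val_mult_linear algebra_simps)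
  moreover have "val_ge (v (G * L) - nmul j D) (hasse j' G)"
  proof (rule val_ge_mono)
    show "val_ge (v G - nmul j' D) (hasse j' G)"
      using G(1) by (simp add: hasse_max_at_def)
    show "v (G * L) - nmul j D \<le> v G - nmul j' D"
      using assms Suc by (simp add: val_mult_linear nmul_Suc algebra_simps)
  qed
  ultimately show ?thesis
    using Suc by (simp add: hasse_mult_linear val_ge_add)
qed (simp add: val_ge_def)

lemma hasse_max_at_mult_linear_eq:
  assumes "v L = D"
  shows "hasse_max_at (G * L) D (Suc m)"
proof -
  have shift: "v (G * L) - nmul (Suc i) D = v G - nmul i D" for i
    using assms by (simp add: val_mult_linear nmul_Suc)
  have gt_Suc: "val_gt (v (G * L) - nmul (Suc j) D) (hasse (Suc j) G * L)" if "m < Suc j" for j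
    using val_gt_mult[of "v G - nmul (Suc j) D" "hasse (Suc j) G" L] G(1) that
    by (simp add: hasse_max_at_def val_mult_linear algebra_simps)
  have "hasse (Suc m) (G * L) = hasse m G + hasse (Suc m) G * L"
    by (simp add: hasse_mult_linear add.commute)
  moreover have "hasse m G \<noteq> 0" "v (hasse m G) = v (G * L) - nmul (Suc m) D"
    using G(1) shift[of m] by (simp_all add: hasse_max_at_def)
  ultimately have exact: "hasse (Suc m) (G * L) \<noteq> 0 \<and> v (hasse (Suc m) (G * L)) = v (G * L) - nmul (Suc m) D"
    using add_val_gt_eq_left[of "hasse m G"] gt_Suc[of m] by simp
  have "val_gt (v (G * L) - nmul j D) (hasse j (G * L))" if "Suc m < j" for j
  proof -
    obtain j' where j': "j = Suc j'" "m < j'"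
      using \<open>Suc m < j\<close> by (cases j) auto
    have "val_gt (v (G * L) - nmul j D) (hasse j' G)"
      using G(1) j' shift[of j'] by (simp add: hasse_max_at_def)
    then show ?thesis
      using gt_Suc[of j'] j' by (simp add: hasse_mult_linear val_gt_add)
  qed
  then show ?thesis
    using exact val_ge_hasse_mult_linear assms unfolding hasse_max_at_def by simp
qed

lemma hasse_max_at_mult_linear_less:
  assumes "v L < D"
  shows "hasse_max_at (G * L) D m"
proof -
  have gt_Suc: "val_gt (v (G * L) - nmul (Suc j) D) (hasse (Suc j) G * L)" if "m < Suc j" for j
    using val_gt_mult[of "v G - nmul (Suc j) D" "hasse (Suc j) G" L] G(1) that
    by (simp add: hasse_max_at_def val_mult_linear algebra_simps)
  have gt: "val_gt (v (G * L) - nmul (Suc j) D) (hasse j G)" for j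
  proof (rule val_gt_if_ge_less)
    show "val_ge (v G - nmul j D) (hasse j G)"
      using G(1) by (simp add: hasse_max_at_def)
    show "v (G * L) - nmul (Suc j) D < v G - nmul j D"
      using assms by (simp add: val_mult_linear nmul_Suc algebra_simps)
  qed
  have exact: "hasse m (G * L) \<noteq> 0 \<and> v (hasse m (G * L)) = v (G * L) - nmul m D"
  proof (cases m)
    case 0
    then show ?thesis
      using G by (simp add: val_mult_linear)
  next
    case (Suc m')
    have "hasse m G * L \<noteq> 0" "v (hasse m G * L) = v (G * L) - nmul m D"
      using G(1) by (simp_all add: hasse_max_at_def mult val_mult_linear algebra_simps)
    then show ?thesis
      using add_val_gt_eq_left[of "hasse m G * L" "hasse m' G"] gt[of m'] Suc
      by (simp add: hasse_mult_linear)
  qed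
  have "val_gt (v (G * L) - nmul j D) (hasse j (G * L))" if "m < j" for j
  proof -
    obtain j' where "j = Suc j'"
      using \<open>m < j\<close> by (cases j) auto
    then show ?thesis
      using gt_Suc[of j'] gt[of j'] that by (simp add: hasse_mult_linear val_gt_add)
  qed
  then show ?thesis
    using exact val_ge_hasse_mult_linear assms unfolding hasse_max_at_def by simp
qed

end

lemma hasse_max_at_lin_prod:
  assumes "lc \<noteq> 0" "\<forall>b\<in>set rs. v [:- b, 1:] \<le> D"
  shows "hasse_max_at (smult lc (lin_prod rs)) D (length (filter (\<lambda>b. v [:- b, 1:] = D) rs))"
  using assms(2)
proof (induction rs)
  case Nil
  show ?case
    using hasse_max_at_const[OF assms(1)] by simp
next
  case (Cons c rs)
  define G where "G = smult lc (lin_prod rs)"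
  have F: "smult lc (lin_prod (c # rs)) = G * [:- c, 1:]"
    unfolding G_def by (metis lin_prod_Cons mult.commute mult_smult_left)
  have G: "hasse_max_at G D (length (filter (\<lambda>b. v [:- b, 1:] = D) rs))" "G \<noteq> 0"
    using Cons assms(1) by (simp_all add: G_def)
  show ?case
  proof (cases "v [:- c, 1:] = D")
    case True
    then show ?thesis
      unfolding F using hasse_max_at_mult_linear_eq[OF G True] by simp
  next
    case False
    then have "v [:- c, 1:] < D"
      using Cons.prems by (simp add: order_less_le)
    then show ?thesis
      unfolding F using hasse_max_at_mult_linear_less[OF G] False by simp
  qed
qed

end

lemma valuation_const_poly:
  assumes "valuation (\<mu> :: 'c::field poly \<Rightarrow> 'g::linordered_ab_group_add)"
  shows "valuation (\<lambda>c. \<mu> [:c:])"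
proof -
  interpret krull_valuation \<mu>
    using assms by unfold_locales
  show ?thesis
    unfolding valuation_def
    using mult[of "[:x:]" "[:y:]" for x y] min_le_add[of "[:x:]" "[:y:]" for x y] by auto
qed

lemma ext_frac_cong:
  assumes "\<And>f. f \<noteq> 0 \<Longrightarrow> w1 f = w2 f"
  shows "ext_frac w1 q = ext_frac w2 q"
proof (cases "q = 0")
  case False
  obtain f d where fd: "(SOME (f, d). d \<noteq> 0 \<and> q = Fract f d) = (f, d)"
    by (cases "SOME (f, d). d \<noteq> 0 \<and> q = Fract f d")
  have "\<exists>p. (\<lambda>(f, d). d \<noteq> 0 \<and> q = Fract f d) p"
    by (cases q) auto
  then have "d \<noteq> 0" "q = Fract f d"
    using someI_ex[of "\<lambda>(f, d). d \<noteq> 0 \<and> q = Fract f d"] fd by auto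
  moreover from this have "f \<noteq> 0"
    using False by (auto simp: fract_collapse)
  ultimately show ?thesis
    using False assms unfolding ext_frac_def fd by simp
qed (simp add: ext_frac_def)

lemma qexp_sum:
  fixes Q f :: "'a::field poly"
  assumes "0 < degree Q"
  shows "f = (\<Sum>i\<le>degree f. qexp Q f i * Q ^ i)"
proof -
  have partial: "f = (\<Sum>i<N. qexp Q f i * Q ^ i) + f div Q ^ N * Q ^ N" for N
  proof (induction N)
    case (Suc N)
    have "f div Q ^ N = f div Q ^ Suc N * Q + qexp Q f N"
      unfolding qexp_def power_Suc2 poly_div_mult_right by simp
    then have "f div Q ^ N * Q ^ N = qexp Q f N * Q ^ N + f div Q ^ Suc N * Q ^ Suc N"
      by (simp add: algebra_simps)
    then show ?case
      using Suc by (simp add: add.assoc)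
  qed simp
  have "degree f * 1 \<le> degree f * degree Q"
    using assms by (intro mult_le_mono2) simp
  then have "degree f < degree Q + degree f * degree Q"
    using assms by linarith
  then have "degree f < Suc (degree f) * degree Q"
    by simp
  moreover have "Q \<noteq> 0"
    using assms by auto
  ultimately have "f div Q ^ Suc (degree f) = 0"
    by (metis degree_power_eq div_poly_less)
  then show ?thesis
    using partial[of "Suc (degree f)"] by (simp add: lessThan_Suc_atMost)
qed

locale alg_closure_embedding =
  fixes emb :: "'k::field \<Rightarrow> 'c::field"
  assumes alg_closure: "is_alg_closure emb"
begin

lemma emb_0 [simp]: "emb 0 = 0"
  and emb_1 [simp]: "emb 1 = 1"
  and emb_add [simp]: "emb (x + y) = emb x + emb y"
  and emb_mult [simp]: "emb (x * y) = emb x * emb y"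
  and inj_emb: "inj emb"
  using alg_closure unfolding is_alg_closure_def by auto

lemma emb_eq_0_iff [simp]: "emb x = 0 \<longleftrightarrow> x = 0"
  by (metis emb_0 inj_emb injD)

lemma emb_sum: "emb (sum g S) = (\<Sum>i\<in>S. emb (g i))"
  by (induction S rule: infinite_finite_induct) auto

abbreviation lift :: "'k poly \<Rightarrow> 'c poly" where
  "lift \<equiv> map_poly emb"

lemma coeff_lift [simp]: "coeff (lift p) i = emb (coeff p i)"
  by (simp add: coeff_map_poly)

lemma lift_eq_0_iff [simp]: "lift p = 0 \<longleftrightarrow> p = 0"
  by (simp add: poly_eq_iff)

lemma degree_lift [simp]: "degree (lift p) = degree p"
  by (simp add: degree_map_poly)

lemma lift_mult: "lift (p * q) = lift p * lift q"
  by (simp add: poly_eq_iff coeff_mult emb_sum)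

lemma lift_power: "lift (p ^ n) = lift p ^ n"
  by (induction n) (simp_all add: lift_mult)

lemma lift_sum: "lift (sum g S) = (\<Sum>i\<in>S. lift (g i))"
  by (induction S rule: infinite_finite_induct) (simp_all add: poly_eq_iff emb_sum)

lemma hasse_lift: "hasse b (lift p) = lift (hasse b p)"
  by (rule hasse_map_poly) simp_all

lemma splits: "(p :: 'c poly) \<noteq> 0 \<Longrightarrow> \<exists>rs. p = smult (lead_coeff p) (lin_prod rs)"
proof (induction "degree p" arbitrary: p)
  case 0
  then show ?case
    by (intro exI[of _ "[]"]) (auto elim: degree_eq_zeroE)
next
  case (Suc m)
  obtain z where "poly p z = 0"
    using alg_closure Suc.hyps(2) unfolding is_alg_closure_def by force
  then obtain q where q: "p = [:- z, 1:] * q"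
    by (metis dvdE poly_eq_0_iff_dvd)
  have "q \<noteq> 0"
    using Suc.prems q by auto
  have "degree p = Suc (degree q)"
    unfolding q using \<open>q \<noteq> 0\<close> by (subst degree_mult_eq) auto
  then have "degree q = m"
    using Suc.hyps(2) by simp
  have "lead_coeff p = lead_coeff q"
    unfolding q lead_coeff_mult by simp
  then obtain rs where "q = smult (lead_coeff p) (lin_prod rs)"
    using Suc.hyps(1)[OF \<open>degree q = m\<close>[symmetric] \<open>q \<noteq> 0\<close>] by auto
  then have "p = smult (lead_coeff p) (lin_prod (z # rs))"
    using q by (metis lin_prod_Cons mult_smult_right)
  then show ?case ..
qed

end

lemma last_argmin:
  fixes w :: "nat \<Rightarrow> 'a::linorder"
  assumes "finite S" "S \<noteq> {}"
  obtains i0 where "i0 \<in> S" "w i0 = Min (w ` S)"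
    "\<And>i. i \<in> S \<Longrightarrow> i \<noteq> i0 \<Longrightarrow> w i0 < w i \<or> (w i = w i0 \<and> i < i0)"
proof -
  define i0 where "i0 = Max {i \<in> S. w i = Min (w ` S)}"
  have "Min (w ` S) \<in> w ` S"
    using assms by simp
  then have "i0 \<in> {i \<in> S. w i = Min (w ` S)}"
    unfolding i0_def using assms(1) by (intro Max_in) auto
  then have i0: "i0 \<in> S" "w i0 = Min (w ` S)"
    by simp_all
  have "w i0 < w i \<or> (w i = w i0 \<and> i < i0)" if "i \<in> S" "i \<noteq> i0" for i
  proof -
    have "i \<le> i0" if "w i = w i0"
      unfolding i0_def using assms(1) \<open>i \<in> S\<close> that i0(2) by (intro Max_ge) auto
    moreover have "w i0 \<le> w i"
      using assms(1) \<open>i \<in> S\<close> i0(2) by simp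
    ultimately show ?thesis
      using \<open>i \<noteq> i0\<close> by (auto simp: order_le_less)
  qed
  with i0 show ?thesis
    using that by blast
qed

locale key_poly_setting =
  alg_closure_embedding emb + nu: krull_valuation \<nu> + mu: poly_valuation \<mu>
  for emb :: "'k::field \<Rightarrow> 'c::field" and \<nu> :: "'k poly \<Rightarrow> 'g::linordered_ab_group_add"
    and \<mu> :: "'c poly \<Rightarrow> 'g" +
  fixes Q :: "'k poly" and a :: 'c
  assumes extends: "\<And>f. f \<noteq> 0 \<Longrightarrow> \<mu> (lift f) = \<nu> f"
    and key: "key_poly \<nu> Q"
    and opt: "optimizing_root emb \<mu> Q a"
    and degree_Q_pos: "0 < degree Q"
begin

abbreviation \<gamma> :: 'g where
  "\<gamma> \<equiv> \<mu> [:- a, 1:]"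

abbreviation taylor :: "'c poly \<Rightarrow> 'c poly" where
  "taylor F \<equiv> pcompose F [:a, 1:]"

sublocale mv: monomial_valuation "\<lambda>c. \<mu> [:c:]" \<gamma>
  by unfold_locales (rule valuation_const_poly[OF mu.valuation])

lemma Q_nonzero: "Q \<noteq> 0"
  using degree_Q_pos by auto

lemma lift_Q_eq_lin_prod:
  obtains rs where "lift Q = lin_prod rs" "a \<in> set rs" "\<forall>b\<in>set rs. \<mu> [:- b, 1:] \<le> \<gamma>"
proof -
  have "lead_coeff (lift Q) = 1"
    using key by (simp add: key_poly_def)
  then obtain rs where rs: "lift Q = lin_prod rs"
    using splits[of "lift Q"] Q_nonzero by auto
  then have "b \<in> set rs \<longleftrightarrow> poly (lift Q) b = 0" for b
    by (simp add: poly_lin_prod_eq_0_iff)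
  then show ?thesis
    using that rs opt unfolding optimizing_root_def by blast
qed

lemma eps_term_Q_le:
  assumes "(y, c) \<in> eps_terms \<nu> Q"
  shows "y \<le> nmul c \<gamma>"
proof -
  obtain rs where rs: "lift Q = lin_prod rs" "\<forall>b\<in>set rs. \<mu> [:- b, 1:] \<le> \<gamma>"
    by (rule lift_Q_eq_lin_prod)
  from assms have y: "y = \<nu> Q - \<nu> (hasse c Q)" and nz: "hasse c Q \<noteq> 0"
    unfolding eps_terms_def by auto
  have "mu.hasse_max_at (lift Q) \<gamma> (length (filter (\<lambda>b. \<mu> [:- b, 1:] = \<gamma>) rs))"
    using mu.hasse_max_at_lin_prod[of 1 rs \<gamma>] rs by simp
  then have "\<mu> (lift Q) - nmul c \<gamma> \<le> \<mu> (lift (hasse c Q))"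
    using nz unfolding mu.hasse_max_at_def mu.val_ge_def hasse_lift by auto
  then have "\<nu> Q - nmul c \<gamma> \<le> \<nu> (hasse c Q)"
    using nz Q_nonzero extends by simp
  then show ?thesis
    using y by (metis add.commute diff_le_eq)
qed

lemma eps_ge_if_root_val_ge:
  assumes f: "f \<noteq> 0" and root: "poly (lift f) b = 0" and "\<gamma> \<le> \<mu> [:- b, 1:]"
  shows "eps_ge \<nu> f Q"
proof -
  obtain rs where rs: "lift f = smult (lead_coeff (lift f)) (lin_prod rs)"
    using splits[of "lift f"] f by auto
  have "b \<in> set rs"
    using root f by (subst (asm) rs) (simp add: poly_lin_prod_eq_0_iff)
  define D where "D = Max ((\<lambda>b. \<mu> [:- b, 1:]) ` set rs)"
  define k where "k = length (filter (\<lambda>b. \<mu> [:- b, 1:] = D) rs)"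
  have D_ge: "\<forall>b\<in>set rs. \<mu> [:- b, 1:] \<le> D"
    unfolding D_def by simp
  have "\<gamma> \<le> D"
    using \<open>b \<in> set rs\<close> D_ge assms(3) by (meson order_trans)
  have "D \<in> (\<lambda>b. \<mu> [:- b, 1:]) ` set rs"
    unfolding D_def using \<open>b \<in> set rs\<close> by (intro Max_in) auto
  then have "filter (\<lambda>b. \<mu> [:- b, 1:] = D) rs \<noteq> []"
    by (auto simp: filter_empty_conv)
  then have "1 \<le> k"
    unfolding k_def by (cases "filter (\<lambda>b. \<mu> [:- b, 1:] = D) rs") auto
  moreover have "degree f = length rs"
    using f by (subst degree_lift[symmetric], subst rs) simp
  then have "k \<le> degree f"
    unfolding k_def by simp
  moreover have "hasse k (lift f) \<noteq> 0" "\<mu> (hasse k (lift f)) = \<mu> (lift f) - nmul k D"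
    using mu.hasse_max_at_lin_prod[OF _ D_ge, of "lead_coeff (lift f)"] f rs
    unfolding mu.hasse_max_at_def k_def by auto
  ultimately have eps_term: "(nmul k D, k) \<in> eps_terms \<nu> f"
    unfolding eps_terms_def hasse_lift using f extends
    by (auto intro!: exI[of _ k] simp: hasse_lift)
  have "nmul k y \<le> nmul c (nmul k D)" if "(y, c) \<in> eps_terms \<nu> Q" for y c
  proof -
    have "nmul k y \<le> nmul k (nmul c \<gamma>)"
      using eps_term_Q_le[OF that] by (rule nmul_mono)
    also have "\<dots> \<le> nmul c (nmul k D)"
      using \<open>\<gamma> \<le> D\<close> by (simp add: nmul_commute nmul_mono)
    finally show ?thesis .
  qed
  then show ?thesis
    unfolding eps_ge_def using eps_term by blast
qed

lemma root_val_less_if_degree_less: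
  assumes "f \<noteq> 0" "degree f < degree Q" "poly (lift f) b = 0"
  shows "\<mu> [:- b, 1:] < \<gamma>"
  using eps_ge_if_root_val_ge[OF assms(1,3)] key assms(1,2) unfolding key_poly_def
  by (meson leD not_le_imp_less)

lemma last_min_taylor_linear:
  assumes "\<mu> [:- b, 1:] \<le> \<gamma>"
  shows "mv.last_min (taylor [:- b, 1:]) (\<mu> [:- b, 1:]) (if \<mu> [:- b, 1:] = \<gamma> then 1 else 0)"
proof -
  have taylor: "taylor [:- b, 1:] = [:a - b, 1:]"
    by (simp add: pcompose_pCons)
  have split: "[:a - b:] = [:- b, 1:] + - [:- a, 1:]"
    by simp
  show ?thesis
  proof (cases "\<mu> [:- b, 1:] = \<gamma>")
    case True
    have "\<gamma> \<le> \<mu> [:a - b:]" if "a - b \<noteq> 0"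
      using mu.min_le_add[of "[:- b, 1:]" "- [:- a, 1:]"] mu.uminus[of "[:- a, 1:]"] that True
      unfolding split by simp
    then have "mv.last_min [:a - b, 1:] \<gamma> 1"
      by (rule mv.last_min_linear_1)
    then show ?thesis
      using True taylor by simp
  next
    case False
    then have less: "\<mu> [:- b, 1:] < \<gamma>"
      using assms by simp
    have "[:a - b:] \<noteq> 0 \<and> \<mu> [:a - b:] = \<mu> [:- b, 1:]"
      unfolding split by (rule mu.add_eq_left_if_less) (use less mu.uminus[of "[:- a, 1:]"] in auto)
    then have "mv.last_min [:a - b, 1:] (\<mu> [:- b, 1:]) 0"
      using mv.last_min_linear_0[of "a - b"] less by simp
    then show ?thesis
      using False taylor by simp
  qed
qed

lemma last_min_taylor_lin_prod:
  assumes "lc \<noteq> 0" "\<forall>b\<in>set rs. \<mu> [:- b, 1:] \<le> \<gamma>"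
  shows "mv.last_min (taylor (smult lc (lin_prod rs))) (\<mu> (smult lc (lin_prod rs)))
           (length (filter (\<lambda>b. \<mu> [:- b, 1:] = \<gamma>) rs))"
  using assms(2)
proof (induction rs)
  case Nil
  show ?case
    using mv.last_min_const[OF assms(1)] by simp
next
  case (Cons c rs)
  define F where "F = smult lc (lin_prod rs)"
  have "mv.last_min (taylor [:- c, 1:] * taylor F) (\<mu> [:- c, 1:] + \<mu> F)
          ((if \<mu> [:- c, 1:] = \<gamma> then 1 else 0) + length (filter (\<lambda>b. \<mu> [:- b, 1:] = \<gamma>) rs))"
    using Cons unfolding F_def by (intro mv.last_min_mult last_min_taylor_linear) auto
  moreover have "smult lc (lin_prod (c # rs)) = [:- c, 1:] * F"
    unfolding F_def by (simp only: lin_prod_Cons mult_smult_right)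
  moreover have "\<mu> ([:- c, 1:] * F) = \<mu> [:- c, 1:] + \<mu> F"
    using assms(1) unfolding F_def by (intro mu.mult) auto
  moreover have "length (filter (\<lambda>b. \<mu> [:- b, 1:] = \<gamma>) (c # rs))
      = (if \<mu> [:- c, 1:] = \<gamma> then 1 else 0) + length (filter (\<lambda>b. \<mu> [:- b, 1:] = \<gamma>) rs)"
    by simp
  ultimately show ?case
    by (simp only: pcompose_mult)
qed

lemma last_min_taylor_small:
  assumes "f \<noteq> 0" "degree f < degree Q"
  shows "mv.last_min (taylor (lift f)) (\<nu> f) 0"
proof -
  obtain rs where rs: "lift f = smult (lead_coeff (lift f)) (lin_prod rs)"
    using splits[of "lift f"] assms by auto
  have "poly (lift f) b = 0" if "b \<in> set rs" for b
    using that assms(1) by (subst rs) (simp add: poly_lin_prod_eq_0_iff)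
  then have small: "\<mu> [:- b, 1:] < \<gamma>" if "b \<in> set rs" for b
    using root_val_less_if_degree_less[OF assms] that by blast
  then have "filter (\<lambda>b. \<mu> [:- b, 1:] = \<gamma>) rs = []"
    by (intro filter_False) (metis order_less_irrefl)
  then have "mv.last_min (taylor (lift f)) (\<mu> (lift f)) 0"
    using last_min_taylor_lin_prod[of "lead_coeff (lift f)" rs] small assms rs
    by (simp add: order_less_imp_le)
  then show ?thesis
    using extends assms by simp
qed

lemma last_min_taylor_Q:
  obtains t where "mv.last_min (taylor (lift Q)) (\<nu> Q) t" "1 \<le> t"
proof -
  obtain rs where rs: "lift Q = lin_prod rs" "a \<in> set rs" "\<forall>b\<in>set rs. \<mu> [:- b, 1:] \<le> \<gamma>"
    by (rule lift_Q_eq_lin_prod)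
  have "\<mu> (lin_prod rs) = \<nu> Q"
    using extends[OF Q_nonzero] rs(1) by simp
  then have "mv.last_min (taylor (lift Q)) (\<nu> Q) (length (filter (\<lambda>b. \<mu> [:- b, 1:] = \<gamma>) rs))"
    using last_min_taylor_lin_prod[of 1 rs] rs by simp
  moreover have "a \<in> set (filter (\<lambda>b. \<mu> [:- b, 1:] = \<gamma>) rs)"
    using rs by simp
  then have "1 \<le> length (filter (\<lambda>b. \<mu> [:- b, 1:] = \<gamma>) rs)"
    by (cases "filter (\<lambda>b. \<mu> [:- b, 1:] = \<gamma>) rs") auto
  ultimately show ?thesis
    using that by blast
qed

lemma taylor_power: "taylor (P ^ n) = taylor P ^ n"
  by (induction n) (simp_all add: pcompose_mult pcompose_1)

lemma trunc_lin_eq_if_last_min: "mv.last_min (taylor F) w t \<Longrightarrow> trunc_lin \<mu> a F = w"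
  using mv.Min_term_val_eq[of "taylor F" w t]
  unfolding trunc_lin_def mv.term_val_def by (simp add: degree_pcompose)

lemma last_min_taylor_qexp_term:
  assumes tQ: "mv.last_min (taylor (lift Q)) (\<nu> Q) tQ" and nz: "qexp Q f i \<noteq> 0"
  shows "mv.last_min (taylor (lift (qexp Q f i * Q ^ i))) (\<nu> (qexp Q f i * Q ^ i)) (i * tQ)"
proof -
  have "degree (qexp Q f i) < degree Q"
    using nz Q_nonzero degree_Q_pos by (auto simp: qexp_def intro: degree_mod_less')
  then have "mv.last_min (taylor (lift (qexp Q f i)) * taylor (lift Q) ^ i)
               (\<nu> (qexp Q f i) + nmul i (\<nu> Q)) (0 + i * tQ)"
    using nz by (intro mv.last_min_mult mv.last_min_power last_min_taylor_small tQ)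
  moreover have "\<nu> (qexp Q f i * Q ^ i) = \<nu> (qexp Q f i) + nmul i (\<nu> Q)"
    using nz Q_nonzero by (simp add: nu.mult nu.power)
  ultimately show ?thesis
    by (simp add: lift_mult lift_power pcompose_mult taylor_power)
qed

lemma trunc_lin_eq_trunc_Q:
  assumes "f \<noteq> 0"
  shows "trunc_lin \<mu> a (lift f) = trunc_Q \<nu> Q f"
proof -
  obtain tQ where tQ: "mv.last_min (taylor (lift Q)) (\<nu> Q) tQ" "1 \<le> tQ"
    by (rule last_min_taylor_Q)
  define S where "S = {i. i \<le> degree f \<and> qexp Q f i \<noteq> 0}"
  define w where "w i = \<nu> (qexp Q f i * Q ^ i)" for i
  have f_S: "f = (\<Sum>i\<in>S. qexp Q f i * Q ^ i)"
    unfolding S_def by (subst qexp_sum[OF degree_Q_pos]) (rule sum.mono_neutral_right, auto)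
  have "finite S"
    by (simp add: S_def)
  moreover have "S \<noteq> {}"
    using f_S assms by auto
  ultimately obtain i0 where i0: "i0 \<in> S" "w i0 = Min (w ` S)"
    and last: "\<And>i. i \<in> S \<Longrightarrow> i \<noteq> i0 \<Longrightarrow> w i0 < w i \<or> (w i = w i0 \<and> i < i0)"
    using last_argmin[of S w] by blast
  have "mv.last_min (\<Sum>i\<in>S. taylor (lift (qexp Q f i * Q ^ i))) (w i0) (i0 * tQ)"
  proof (rule mv.last_min_sum[OF \<open>finite S\<close> i0(1)])
    show "mv.last_min (taylor (lift (qexp Q f i * Q ^ i))) (w i) (i * tQ)" if "i \<in> S" for i
      using that unfolding S_def w_def by (intro last_min_taylor_qexp_term tQ(1)) simp
    show "w i0 < w i \<or> (w i = w i0 \<and> i * tQ < i0 * tQ)" if "i \<in> S" "i \<noteq> i0" for i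
      using last[OF that] tQ(2) by auto
  qed
  then have "trunc_lin \<mu> a (lift f) = w i0"
    by (intro trunc_lin_eq_if_last_min) (subst f_S, simp add: lift_sum pcompose_sum)
  moreover have "trunc_Q \<nu> Q f = Min (w ` S)"
    unfolding trunc_Q_def w_def S_def by (rule arg_cong[where f = Min]) auto
  ultimately show ?thesis
    using i0(2) by simp
qed

end

theorem corollary3p12:
  fixes emb :: "'k::field \<Rightarrow> 'c::field"
    and \<nu> :: "'k poly \<Rightarrow> 'g::linordered_ab_group_add"
    and \<mu> :: "'c poly \<Rightarrow> 'g"
    and Q h :: "'k poly" and a :: 'c and n e s :: nat
    and t :: "nat \<Rightarrow> 'k poly"
  assumes closure: "is_alg_closure emb"
    and val_nu: "valuation \<nu>"
    and val_mu: "valuation \<mu>"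
    and extends: "\<forall>f. f \<noteq> 0 \<longrightarrow> \<mu> (map_poly emb f) = \<nu> f"
    and key: "key_poly \<nu> Q" and degQ: "degree Q = n"
    and opt: "optimizing_root emb \<mu> Q a"
    and nuQ: "\<nu> Q \<in> vgroup_closure \<mu>"
    and e_pos: "0 < e" and e_in: "nmul e (\<nu> Q) \<in> vgroup_Ka emb \<mu> a"
    and e_least: "\<forall>e'. 0 < e' \<and> e' < e \<longrightarrow> nmul e' (\<nu> Q) \<notin> vgroup_Ka emb \<mu> a"
    and h_nz: "h \<noteq> 0" and deg_h: "degree h < n" and nu_h: "\<nu> h = nmul e (\<nu> Q)"
    and deg_t: "\<forall>i. t i \<noteq> 0 \<longrightarrow> degree (t i) < n * e"
  shows "let r = Fract (Q ^ e) h;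
             g = (\<Sum>i\<le>s. Fract (t i) 1 * r ^ i)
         in ext_frac (\<lambda>f. trunc_lin \<mu> a (map_poly emb f)) g = ext_frac (trunc_Q \<nu> Q) g \<and>
            (\<forall>P R :: 'k poly. poly (map_poly (\<lambda>c. Fract [:c:] 1) R) r \<noteq> 0 \<longrightarrow>
               (let u = poly (map_poly (\<lambda>c. Fract [:c:] 1) P) r / poly (map_poly (\<lambda>c. Fract [:c:] 1) R) r
                in ext_frac (\<lambda>f. trunc_lin \<mu> a (map_poly emb f)) u = ext_frac (trunc_Q \<nu> Q) u))"
proof -
  interpret key_poly_setting emb \<nu> \<mu> Q a
    using closure val_nu val_mu extends key opt deg_h degQ by unfold_locales auto
  have "ext_frac (\<lambda>f. trunc_lin \<mu> a (lift f)) u = ext_frac (trunc_Q \<nu> Q) u" for u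
    by (rule ext_frac_cong) (rule trunc_lin_eq_trunc_Q)
  then show ?thesis
    unfolding Let_def by simp
qed

end
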